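(* For all complex $q$ with $|q|<1$, $$\psi(q)\psi(q^7)=\psi(q^8)\varphi(q^{28})+q^6\varphi(q^4)\psi(q^{56})+q\psi(q^{16})\varphi(q^{56})+q^3\psi(q^4)\psi(q^{28})+q^{13}\varphi(q^8)\psi(q^{112}).$$
   Context: Ramanujan's theta functions are $\varphi(q)=\sum_{n=-\infty}^{\infty}q^{n^2}$ and $\psi(q)=\sum_{n=0}^{\infty}q^{n(n+1)/2}$ for $|q|<1$. *)

theory Defs
  imports "HOL-Analysis.Analysis"
begin

definition ram_phi :: "complex \<Rightarrow> complex" where
  "ram_phi q = (\<Sum>\<^sub>\<infinity>n::int. q ^ nat (n\<^sup>2))"

definition ram_psi :: "complex \<Rightarrow> complex" where
  "ram_psi q = (\<Sum>n::nat. q ^ (n * (n + 1) div 2))"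

end

theory Submission
  imports Defs
begin

(* Both theta functions are absolutely convergent sums over Z: phi(q) of q^(n^2) and psi(q) of
   q^T(n) with T(n) = 2 n^2 + n.  Since 8 T(n) + 1 = (4 n + 1)^2, the product psi(q) psi(q^7) sums
   q^((u^2 + 7 v^2 - 8) / 8) over u = 4 a + 1, v = 4 b + 1.  The substitution
   (x, y) = ((u + 7 v) / 4, (u - v) / 4) = (a + 7 b + 2, a - b) gives u^2 + 7 v^2 = 2 (x^2 + 7 y^2)
   and maps Z^2 onto the lattice x - y = 2 (mod 8), so psi(q) psi(q^7) is the sum of
   q^((x^2 + 7 y^2 - 4) / 4) over that lattice.  Split the lattice according to y mod 4 and, when
   y = 3 (mod 4), according to x + y mod 16.  Each of the five classes is again the bijective image
   of Z^2 under a map, linear up to a sign fixed by a parity, along which (x^2 + 7 y^2 - 4) / 4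
   becomes c + k e(a) + m e'(b) with e, e' each one of n^2 and T(n).  So each class contributes
   one of the five products q^c phi/psi(q^k) phi/psi(q^m) on the right. *)

lemma int_even_odd_cases:
  fixes c :: int
  obtains (even) e where "c = 2 * e" | (odd) e where "c = 2 * e + 1"
  by (metis evenE oddE)

lemma int_mod_eqE:
  fixes x m r :: int
  assumes "x mod m = r"
  obtains k where "x = m * k + r"
  using assms by (metis div_mult_mod_eq mult.commute)

lemma has_sum_triangular_int_iff:
  "((\<lambda>n::int. f (nat (2 * n\<^sup>2 + n))) has_sum s) UNIV \<longleftrightarrow>
   ((\<lambda>m. f (m * (m + 1) div 2)) has_sum s) UNIV"
proof (rule has_sum_reindex_bij_witness
    [where j = "\<lambda>n. if n \<ge> 0 then nat (2 * n) else nat (- 2 * n - 1)"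
       and i = "\<lambda>m. if even m then int m div 2 else - (int m + 1) div 2"])
  fix n :: int
  define m where "m = (if n \<ge> 0 then nat (2 * n) else nat (- 2 * n - 1))"
  have "int (m * (m + 1) div 2) = int m * (int m + 1) div 2"
    by (simp only: zdiv_int of_nat_mult of_nat_add of_nat_1 of_nat_numeral)
  also have "int m * (int m + 1) = 2 * (2 * n\<^sup>2 + n)"
    by (auto simp: m_def power2_eq_square algebra_simps)
  finally have "int (m * (m + 1) div 2) = 2 * n\<^sup>2 + n"
    by simp
  then show "f (m * (m + 1) div 2) = f (nat (2 * n\<^sup>2 + n))"
    by (metis nat_int)
  show "(if even m then int m div 2 else - (int m + 1) div 2) = n"
    by (auto simp: m_def even_nat_iff)
qed (auto elim!: evenE oddE)

definition theta_series :: "(int \<Rightarrow> int) \<Rightarrow> (complex \<Rightarrow> complex) \<Rightarrow> bool" where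
  "theta_series e F \<longleftrightarrow> (\<forall>n. 0 \<le> e n) \<and>
     (\<forall>q. norm q < 1 \<longrightarrow>
        ((\<lambda>n. q ^ nat (e n)) has_sum F q) UNIV \<and> (\<lambda>n. norm (q ^ nat (e n))) summable_on UNIV)"

lemma theta_series_ram_psi: "theta_series (\<lambda>n. 2 * n\<^sup>2 + n) ram_psi"
  unfolding theta_series_def
proof (intro conjI allI impI)
  show "0 \<le> 2 * n\<^sup>2 + n" for n :: int
  proof -
    have "0 \<le> n * (2 * n + 1)"
      unfolding zero_le_mult_iff by linarith
    then show ?thesis
      by (simp add: power2_eq_square algebra_simps)
  qed
  fix q :: complex
  assume q: "norm q < 1"
  have "norm (q ^ (m * (m + 1) div 2)) \<le> norm q ^ m" for m :: nat
  proof -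
    have "m \<le> m * (m + 1) div 2"
      by (cases m) simp_all
    then show ?thesis
      using q by (simp add: norm_power power_decreasing)
  qed
  then have abs: "summable (\<lambda>m. norm (q ^ (m * (m + 1) div 2)))"
    using q by (intro summable_comparison_test'[OF summable_geometric[of "norm q"]]) simp_all
  have "(\<lambda>m. q ^ (m * (m + 1) div 2)) sums ram_psi q"
    unfolding ram_psi_def using summable_norm_cancel[OF abs] by (rule summable_sums)
  then have "((\<lambda>m. q ^ (m * (m + 1) div 2)) has_sum ram_psi q) UNIV"
    by (rule norm_summable_imp_has_sum[OF abs])
  then show "((\<lambda>n. q ^ nat (2 * n\<^sup>2 + n)) has_sum ram_psi q) UNIV"
    by (simp add: has_sum_triangular_int_iff)
  have "(\<lambda>m. norm (q ^ (m * (m + 1) div 2))) summable_on UNIV"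
    using abs by (intro norm_summable_imp_summable_on) simp
  then show "(\<lambda>n. norm (q ^ nat (2 * n\<^sup>2 + n))) summable_on UNIV"
    unfolding summable_on_def has_sum_triangular_int_iff[of "\<lambda>k. norm (q ^ k)"] .
qed

lemma theta_series_ram_phi: "theta_series (\<lambda>n. n\<^sup>2) ram_phi"
  unfolding theta_series_def
proof (intro conjI allI impI zero_le_power2)
  fix q :: complex
  assume q: "norm q < 1"
  \<comment> \<open>Since \<open>3 n\<^sup>2 \<ge> 2 n\<^sup>2 + n\<close>, the series for \<open>\<phi>(q)\<close> is dominated by that
    for \<open>\<psi>\<close> at the real cube root of \<open>|q|\<close>.\<close>
  define r where "r = root 3 (norm q)"
  have r: "0 \<le> r" "r < 1" "r ^ 3 = norm q"
    using q by (simp_all add: r_def)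
  have "(\<lambda>n. norm (complex_of_real r ^ nat (2 * n\<^sup>2 + n))) summable_on UNIV"
    using theta_series_ram_psi r by (simp add: theta_series_def)
  then show abs: "(\<lambda>n. norm (q ^ nat (n\<^sup>2))) summable_on UNIV"
  proof (rule Infinite_Sum.abs_summable_on_comparison_test)
    fix n :: int
    have "n \<le> n\<^sup>2"
      unfolding power2_eq_square using zero_le_square[of n] mult_left_mono[of 1 n n]
      by (cases "n \<le> 0") (linarith, auto)
    then have "nat (2 * n\<^sup>2 + n) \<le> 3 * nat (n\<^sup>2)"
      by linarith
    then have "r ^ (3 * nat (n\<^sup>2)) \<le> r ^ nat (2 * n\<^sup>2 + n)"
      using r by (intro power_decreasing) simp_all
    then show "norm (q ^ nat (n\<^sup>2)) \<le> norm (complex_of_real r ^ nat (2 * n\<^sup>2 + n))"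
      using r by (simp add: norm_power power_mult)
  qed
  show "((\<lambda>n. q ^ nat (n\<^sup>2)) has_sum ram_phi q) UNIV"
    unfolding ram_phi_def
    using Infinite_Sum.abs_summable_summable[OF abs] by (rule has_sum_infsum)
qed

lemma has_sum_product_abs_summable:
  fixes f g :: "_ \<Rightarrow> 'a::{real_normed_div_algebra, banach}"
  assumes "(f has_sum F) A" "(g has_sum G) B"
    and "(\<lambda>a. norm (f a)) summable_on A" "(\<lambda>b. norm (g b)) summable_on B"
  shows "((\<lambda>(a, b). f a * g b) has_sum F * G) (A \<times> B)"
proof (rule has_sum_SigmaI)
  show "((\<lambda>b. (\<lambda>(a, b). f a * g b) (a, b)) has_sum f a * G) B" for a
    using has_sum_cmult_right[OF assms(2)] by simp
  show "((\<lambda>a. f a * G) has_sum F * G) A"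
    using has_sum_cmult_left[OF assms(1)] .
  have "(\<lambda>ab. norm (case ab of (a, b) \<Rightarrow> f a * g b)) summable_on A \<times> B"
  proof (rule Infinite_Sum.abs_summable_on_Sigma_iff[THEN iffD2], intro conjI ballI)
    show "(\<lambda>b. norm ((\<lambda>(a, b). f a * g b) (a, b))) summable_on B" for a
      using summable_on_cmult_right[OF assms(4), of "norm (f a)"] by (simp add: norm_mult)
    have "(\<lambda>a. norm (f a) * (\<Sum>\<^sub>\<infinity>b\<in>B. norm (g b))) summable_on A"
      using summable_on_cmult_left[OF assms(3)] .
    then show "(\<lambda>a. norm (\<Sum>\<^sub>\<infinity>b\<in>B. norm ((\<lambda>(a, b). f a * g b) (a, b))))
      summable_on A"
      by (simp add: norm_mult infsum_cmult_right' infsum_nonneg)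
  qed
  then show "(\<lambda>(a, b). f a * g b) summable_on A \<times> B"
    by (rule Infinite_Sum.abs_summable_summable)
qed

definition quad_form :: "int \<times> int \<Rightarrow> int" where
  "quad_form = (\<lambda>(x, y). x\<^sup>2 + 7 * y\<^sup>2)"

text \<open>On the lattice \<open>x - y = 2 (mod 8)\<close>, where this is used, \<open>quad_form z - 4\<close> is a
  nonnegative multiple of 4, so neither \<open>div\<close> nor \<open>nat\<close> truncates.\<close>

definition form_term :: "complex \<Rightarrow> int \<times> int \<Rightarrow> complex" where
  "form_term q z = q ^ nat ((quad_form z - 4) div 4)"

lemma has_sum_form_term_bij_betw:
  fixes q :: complex
  assumes q: "norm q < 1" and F: "theta_series e F" and G: "theta_series e' G"
    and "0 < k" "0 < m"
    and p: "bij_betw p UNIV S"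
    and form: "\<And>a b. quad_form (p (a, b)) = 4 * (1 + int c + int k * e a + int m * e' b)"
  shows "(form_term q has_sum q ^ c * F (q ^ k) * G (q ^ m)) S"
proof -
  have "norm (q ^ k) < 1" "norm (q ^ m) < 1"
    using q \<open>0 < k\<close> \<open>0 < m\<close> by (simp_all add: norm_power power_less_one_iff)
  then have "((\<lambda>(a, b). (q ^ k) ^ nat (e a) * (q ^ m) ^ nat (e' b))
      has_sum F (q ^ k) * G (q ^ m)) (UNIV \<times> UNIV)"
    using F G by (intro has_sum_product_abs_summable) (simp_all add: theta_series_def)
  from has_sum_cmult_right[OF this, of "q ^ c"]
  have "((\<lambda>(a, b). q ^ c * ((q ^ k) ^ nat (e a) * (q ^ m) ^ nat (e' b)))
      has_sum q ^ c * F (q ^ k) * G (q ^ m)) UNIV"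
    by (simp add: case_prod_unfold mult.assoc)
  also have "(\<lambda>(a, b). q ^ c * ((q ^ k) ^ nat (e a) * (q ^ m) ^ nat (e' b))) =
      (\<lambda>ab. form_term q (p ab))"
  proof (clarsimp simp: fun_eq_iff)
    fix a b
    have "nat ((quad_form (p (a, b)) - 4) div 4) = c + k * nat (e a) + m * nat (e' b)"
      using F G by (simp add: form theta_series_def nat_add_distrib nat_mult_distrib)
    then show "q ^ c * ((q ^ k) ^ nat (e a) * (q ^ m) ^ nat (e' b)) = form_term q (p (a, b))"
      by (simp add: form_term_def power_add power_mult)
  qed
  finally show ?thesis
    using has_sum_reindex_bij_betw[OF p] by blast
qed

lemma bij_betw_lattice:
  "bij_betw (\<lambda>(a, b). (a + 7 * b + 2, a - b)) UNIV {(x, y). (x - y) mod 8 = (2::int)}"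
  (is "bij_betw ?p _ ?S")
proof (rule bij_betwI')
  show "?p u = ?p v \<longleftrightarrow> u = v" for u v
    by (cases u, cases v) auto
  show "?p u \<in> ?S" for u
    by (cases u) simp
  fix z assume "z \<in> ?S"
  then obtain x y where z: "z = (x, y)" and "(x - y) mod 8 = 2"
    by (cases z) simp
  from \<open>(x - y) mod 8 = 2\<close> obtain b where "x - y = 8 * b + 2"
    by (rule int_mod_eqE)
  then have "z = ?p (y + b, b)"
    using z by simp
  then show "\<exists>u\<in>UNIV. z = ?p u"
    by (rule bexI) simp
qed

definition param_y_0 :: "int \<times> int \<Rightarrow> int \<times> int" where
  "param_y_0 = (\<lambda>(a, c). (if even c then 8 * a + 2 else - 8 * a - 2, 4 * c))"

lemma lattice_y_0_subset_range:
  "{(x, y). (x - y) mod 8 = (2::int) \<and> y mod 4 = 0} \<subseteq> range param_y_0"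
proof
  fix z assume "z \<in> {(x, y). (x - y) mod 8 = (2::int) \<and> y mod 4 = 0}"
  then obtain x y where z: "z = (x, y)" and "(x - y) mod 8 = 2" "y mod 4 = 0"
    by (cases z) simp
  from \<open>y mod 4 = 0\<close> obtain c where c: "y = 4 * c"
    by (auto elim: int_mod_eqE)
  show "z \<in> range param_y_0"
  proof (cases c rule: int_even_odd_cases)
    case (even e)
    then have "x mod 8 = 2"
      using \<open>(x - y) mod 8 = 2\<close> c by presburger
    then obtain a where "x = 8 * a + 2"
      by (rule int_mod_eqE)
    then have "z = param_y_0 (a, c)"
      using z c even by (simp add: param_y_0_def)
    then show ?thesis
      by (rule range_eqI)
  next
    case (odd e)
    then have "x mod 8 = 6"
      using \<open>(x - y) mod 8 = 2\<close> c by presburger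
    then obtain k where "x = 8 * k + 6"
      by (rule int_mod_eqE)
    then have "z = param_y_0 (- k - 1, c)"
      using z c odd by (simp add: param_y_0_def)
    then show ?thesis
      by (rule range_eqI)
  qed
qed

lemma bij_betw_param_y_0:
  "bij_betw param_y_0 UNIV {(x, y). (x - y) mod 8 = (2::int) \<and> y mod 4 = 0}"
  (is "bij_betw _ _ ?S")
proof (rule bij_betw_imageI)
  show "inj param_y_0"
    by (auto simp: inj_def param_y_0_def split: if_splits)
  have "param_y_0 u \<in> ?S" for u
  proof (cases u)
    case (Pair a c)
    then show ?thesis
      by (cases c rule: int_even_odd_cases) (simp_all add: param_y_0_def, presburger+)
  qed
  then show "range param_y_0 = ?S"
    by (intro subset_antisym image_subsetI lattice_y_0_subset_range)
qed

definition param_y_2 :: "int \<times> int \<Rightarrow> int \<times> int" where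
  "param_y_2 = (\<lambda>(c, b). (4 * c, if even c then - 8 * b - 2 else 8 * b + 2))"

lemma lattice_y_2_subset_range:
  "{(x, y). (x - y) mod 8 = (2::int) \<and> y mod 4 = 2} \<subseteq> range param_y_2"
proof
  fix z assume "z \<in> {(x, y). (x - y) mod 8 = (2::int) \<and> y mod 4 = 2}"
  then obtain x y where z: "z = (x, y)" and "(x - y) mod 8 = 2" "y mod 4 = 2"
    by (cases z) simp
  then have "x mod 4 = 0"
    by presburger
  then obtain c where c: "x = 4 * c"
    by (auto elim: int_mod_eqE)
  show "z \<in> range param_y_2"
  proof (cases c rule: int_even_odd_cases)
    case (even e)
    then have "y mod 8 = 6"
      using \<open>(x - y) mod 8 = 2\<close> c by presburger
    then obtain k where "y = 8 * k + 6"
      by (rule int_mod_eqE)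
    then have "z = param_y_2 (c, - k - 1)"
      using z c even by (simp add: param_y_2_def)
    then show ?thesis
      by (rule range_eqI)
  next
    case (odd e)
    then have "y mod 8 = 2"
      using \<open>(x - y) mod 8 = 2\<close> c by presburger
    then obtain b where "y = 8 * b + 2"
      by (rule int_mod_eqE)
    then have "z = param_y_2 (c, b)"
      using z c odd by (simp add: param_y_2_def)
    then show ?thesis
      by (rule range_eqI)
  qed
qed

lemma bij_betw_param_y_2:
  "bij_betw param_y_2 UNIV {(x, y). (x - y) mod 8 = (2::int) \<and> y mod 4 = 2}"
  (is "bij_betw _ _ ?S")
proof (rule bij_betw_imageI)
  show "inj param_y_2"
    by (auto simp: inj_def param_y_2_def split: if_splits)
  have "param_y_2 u \<in> ?S" for u
  proof (cases u)
    case (Pair c b)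
    then show ?thesis
      by (cases c rule: int_even_odd_cases) (simp_all add: param_y_2_def, presburger+)
  qed
  then show "range param_y_2 = ?S"
    by (intro subset_antisym image_subsetI lattice_y_2_subset_range)
qed

definition param_y_3_0 :: "int \<times> int \<Rightarrow> int \<times> int" where
  "param_y_3_0 = (\<lambda>(a, c).
     if even c then (4 * a + 1 + 14 * c, 2 * c - 4 * a - 1)
     else (14 * c - 4 * a - 1, 2 * c + 4 * a + 1))"

lemma lattice_y_3_0_subset_range:
  "{(x, y). (x - y) mod 8 = (2::int) \<and> y mod 4 = 3 \<and> (x + y) mod 16 = 0}
     \<subseteq> range param_y_3_0"
proof
  fix z
  assume "z \<in> {(x, y). (x - y) mod 8 = (2::int) \<and> y mod 4 = 3 \<and> (x + y) mod 16 = 0}"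
  then obtain x y where z: "z = (x, y)" and "y mod 4 = 3" "(x + y) mod 16 = 0"
    by (cases z) simp
  then have "x mod 4 = 1"
    by presburger
  then obtain k where k: "x = 4 * k + 1"
    by (rule int_mod_eqE)
  from \<open>(x + y) mod 16 = 0\<close> obtain c where "x + y = 16 * c"
    by (auto elim: int_mod_eqE)
  then have z': "z = (4 * k + 1, 16 * c - 4 * k - 1)"
    using z k by simp
  show "z \<in> range param_y_3_0"
  proof (cases c rule: int_even_odd_cases)
    case (even e)
    then have "z = param_y_3_0 (k - 7 * e, c)"
      unfolding z' by (simp add: param_y_3_0_def algebra_simps)
    then show ?thesis
      by (rule range_eqI)
  next
    case (odd e)
    then have "z = param_y_3_0 (7 * e + 3 - k, c)"
      unfolding z' by (simp add: param_y_3_0_def algebra_simps)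
    then show ?thesis
      by (rule range_eqI)
  qed
qed

lemma bij_betw_param_y_3_0:
  "bij_betw param_y_3_0 UNIV
     {(x, y). (x - y) mod 8 = (2::int) \<and> y mod 4 = 3 \<and> (x + y) mod 16 = 0}"
  (is "bij_betw _ _ ?S")
proof (rule bij_betw_imageI)
  have sum: "fst (param_y_3_0 (a, c)) + snd (param_y_3_0 (a, c)) = 16 * c" for a c
    by (simp add: param_y_3_0_def)
  show "inj param_y_3_0"
  proof (rule injI)
    fix u v assume eq: "param_y_3_0 u = param_y_3_0 v"
    obtain a c a' c' where uv: "u = (a, c)" "v = (a', c')"
      by force
    have "c = c'"
      using sum[of a c] sum[of a' c'] eq uv by simp
    then show "u = v"
      using eq uv by (simp add: param_y_3_0_def split: if_splits)
  qed
  have "param_y_3_0 u \<in> ?S" for u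
  proof (cases u)
    case (Pair a c)
    then show ?thesis
      by (cases c rule: int_even_odd_cases) (simp_all add: param_y_3_0_def, presburger+)
  qed
  then show "range param_y_3_0 = ?S"
    by (intro subset_antisym image_subsetI lattice_y_3_0_subset_range)
qed

definition param_y_1 :: "int \<times> int \<Rightarrow> int \<times> int" where
  "param_y_1 = (\<lambda>(a, b).
     if even (a + b) then (14 * b - 2 * a + 3, 2 * a + 2 * b + 1)
     else (2 * a - 14 * b - 3, - 2 * a - 2 * b - 1))"

lemma lattice_y_1_subset_range:
  "{(x, y). (x - y) mod 8 = (2::int) \<and> y mod 4 = 1} \<subseteq> range param_y_1"
proof
  fix z assume "z \<in> {(x, y). (x - y) mod 8 = (2::int) \<and> y mod 4 = 1}"
  then obtain x y where z: "z = (x, y)" and "(x - y) mod 8 = 2" "y mod 4 = 1"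
    by (cases z) simp
  from \<open>y mod 4 = 1\<close> obtain t where t: "y = 4 * t + 1"
    by (rule int_mod_eqE)
  have "(x + y) mod 16 = 4 \<or> (x + y) mod 16 = 12"
    using \<open>(x - y) mod 8 = 2\<close> \<open>y mod 4 = 1\<close> by presburger
  then show "z \<in> range param_y_1"
  proof
    assume "(x + y) mod 16 = 4"
    then obtain b where "x + y = 16 * b + 4"
      by (rule int_mod_eqE)
    then have "z = (16 * b - 4 * t + 3, 4 * t + 1)"
      using z t by simp
    then have "z = param_y_1 (2 * t - b, b)"
      by (simp add: param_y_1_def algebra_simps)
    then show ?thesis
      by (rule range_eqI)
  next
    assume "(x + y) mod 16 = 12"
    then obtain b where "x + y = 16 * b + 12"
      by (rule int_mod_eqE)
    then have "z = (16 * b - 4 * t + 11, 4 * t + 1)"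
      using z t by simp
    then have "z = param_y_1 (b - 2 * t, - b - 1)"
      by (simp add: param_y_1_def algebra_simps)
    then show ?thesis
      by (rule range_eqI)
  qed
qed

lemma inj_param_y_1: "inj param_y_1"
proof (rule injI)
  fix u v assume eq: "param_y_1 u = param_y_1 v"
  obtain a b a' b' where uv: "u = (a, b)" "v = (a', b')"
    by force
  show "u = v"
  proof (cases "even (a + b) \<longleftrightarrow> even (a' + b')")
    case True
    then show ?thesis
      using eq uv by (cases "even (a + b)") (simp_all add: param_y_1_def)
  next
    case False
    then consider "even (a + b)" "odd (a' + b')" | "odd (a + b)" "even (a' + b')"
      by blast
    \<comment> \<open>Opposite signs: \<open>x + y\<close> would equal both \<open>16 b + 4\<close> and \<open>- 16 b' - 4\<close>.\<close>
    then have "16 * (b + b') = - 8"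
      by cases (use eq uv in \<open>simp_all add: param_y_1_def\<close>)
    moreover have "16 * t \<noteq> (- 8 :: int)" for t
      by presburger
    ultimately show ?thesis
      by blast
  qed
qed

lemma bij_betw_param_y_1:
  "bij_betw param_y_1 UNIV {(x, y). (x - y) mod 8 = (2::int) \<and> y mod 4 = 1}"
  (is "bij_betw _ _ ?S")
proof (rule bij_betw_imageI)
  show "inj param_y_1"
    by (rule inj_param_y_1)
  have "param_y_1 u \<in> ?S" for u
  proof (cases u)
    case (Pair a b)
    have "\<exists>e. a = 2 * e - b \<or> a = 2 * e + 1 - b"
      by presburger
    then obtain e where "a = 2 * e - b \<or> a = 2 * e + 1 - b"
      by blast
    then show ?thesis
      unfolding Pair by (elim disjE) (simp_all add: param_y_1_def, presburger+)
  qed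
  then show "range param_y_1 = ?S"
    by (intro subset_antisym image_subsetI lattice_y_1_subset_range)
qed

definition param_y_3_8 :: "int \<times> int \<Rightarrow> int \<times> int" where
  "param_y_3_8 = (\<lambda>(c, b).
     if odd c then (2 * c + 28 * b + 7, 4 * b + 1 - 2 * c)
     else (2 * c - 28 * b - 7, - 4 * b - 1 - 2 * c))"

lemma lattice_y_3_8_subset_range:
  "{(x, y). (x - y) mod 8 = (2::int) \<and> y mod 4 = 3 \<and> (x + y) mod 16 = 8}
     \<subseteq> range param_y_3_8"
proof
  fix z
  assume "z \<in> {(x, y). (x - y) mod 8 = (2::int) \<and> y mod 4 = 3 \<and> (x + y) mod 16 = 8}"
  then obtain x y where z: "z = (x, y)" and "y mod 4 = 3" "(x + y) mod 16 = 8"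
    by (cases z) simp
  from \<open>y mod 4 = 3\<close> obtain t where t: "y = 4 * t + 3"
    by (rule int_mod_eqE)
  from \<open>(x + y) mod 16 = 8\<close> obtain m where "x + y = 16 * m + 8"
    by (rule int_mod_eqE)
  then have z': "z = (16 * m - 4 * t + 5, 4 * t + 3)"
    using z t by simp
  show "z \<in> range param_y_3_8"
  proof (cases m rule: int_even_odd_cases)
    case (even f)
    then have "z = param_y_3_8 (2 * f - 2 * t - 1, f)"
      unfolding z' by (simp add: param_y_3_8_def algebra_simps)
    then show ?thesis
      by (rule range_eqI)
  next
    case (odd f)
    then have "z = param_y_3_8 (2 * f - 2 * t, - f - 1)"
      unfolding z' by (simp add: param_y_3_8_def algebra_simps)
    then show ?thesis
      by (rule range_eqI)
  qed
qed

lemma bij_betw_param_y_3_8: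
  "bij_betw param_y_3_8 UNIV
     {(x, y). (x - y) mod 8 = (2::int) \<and> y mod 4 = 3 \<and> (x + y) mod 16 = 8}"
  (is "bij_betw _ _ ?S")
proof (rule bij_betw_imageI)
  have diff: "fst (param_y_3_8 (c, b)) - 7 * snd (param_y_3_8 (c, b)) = 16 * c" for c b
    by (simp add: param_y_3_8_def)
  show "inj param_y_3_8"
  proof (rule injI)
    fix u v assume eq: "param_y_3_8 u = param_y_3_8 v"
    obtain c b c' b' where uv: "u = (c, b)" "v = (c', b')"
      by force
    have "c = c'"
      using diff[of c b] diff[of c' b'] eq uv by simp
    then show "u = v"
      using eq uv by (simp add: param_y_3_8_def split: if_splits)
  qed
  have "param_y_3_8 u \<in> ?S" for u
  proof (cases u)
    case (Pair c b)
    then show ?thesis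
      by (cases c rule: int_even_odd_cases) (simp_all add: param_y_3_8_def, presburger+)
  qed
  then show "range param_y_3_8 = ?S"
    by (intro subset_antisym image_subsetI lattice_y_3_8_subset_range)
qed

lemma has_sum_form_term_lattice:
  fixes q :: complex
  assumes "norm q < 1"
  shows "(form_term q has_sum ram_psi q * ram_psi (q ^ 7)) {(x, y). (x - y) mod 8 = 2}"
proof -
  have "(form_term q has_sum q ^ 0 * ram_psi (q ^ 1) * ram_psi (q ^ 7))
      {(x, y). (x - y) mod 8 = 2}"
    by (rule has_sum_form_term_bij_betw
        [OF assms theta_series_ram_psi theta_series_ram_psi _ _ bij_betw_lattice])
      (simp_all add: quad_form_def power2_eq_square algebra_simps)
  then show ?thesis
    by simp
qed

lemma has_sum_form_term_y_0:
  fixes q :: complex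
  assumes "norm q < 1"
  shows "(form_term q has_sum ram_psi (q ^ 8) * ram_phi (q ^ 28))
    {(x, y). (x - y) mod 8 = 2 \<and> y mod 4 = 0}"
proof -
  have "(form_term q has_sum q ^ 0 * ram_psi (q ^ 8) * ram_phi (q ^ 28))
      {(x, y). (x - y) mod 8 = 2 \<and> y mod 4 = 0}"
    by (rule has_sum_form_term_bij_betw
        [OF assms theta_series_ram_psi theta_series_ram_phi _ _ bij_betw_param_y_0])
      (simp_all add: param_y_0_def quad_form_def power2_eq_square algebra_simps)
  then show ?thesis
    by simp
qed

lemma has_sum_form_term_y_2:
  fixes q :: complex
  assumes "norm q < 1"
  shows "(form_term q has_sum q ^ 6 * ram_phi (q ^ 4) * ram_psi (q ^ 56))
    {(x, y). (x - y) mod 8 = 2 \<and> y mod 4 = 2}"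
  by (rule has_sum_form_term_bij_betw
      [OF assms theta_series_ram_phi theta_series_ram_psi _ _ bij_betw_param_y_2])
    (simp_all add: param_y_2_def quad_form_def power2_eq_square algebra_simps)

lemma has_sum_form_term_y_3_0:
  fixes q :: complex
  assumes "norm q < 1"
  shows "(form_term q has_sum q * ram_psi (q ^ 16) * ram_phi (q ^ 56))
    {(x, y). (x - y) mod 8 = 2 \<and> y mod 4 = 3 \<and> (x + y) mod 16 = 0}"
proof -
  have "(form_term q has_sum q ^ 1 * ram_psi (q ^ 16) * ram_phi (q ^ 56))
      {(x, y). (x - y) mod 8 = 2 \<and> y mod 4 = 3 \<and> (x + y) mod 16 = 0}"
    by (rule has_sum_form_term_bij_betw
        [OF assms theta_series_ram_psi theta_series_ram_phi _ _ bij_betw_param_y_3_0])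
      (simp_all add: param_y_3_0_def quad_form_def power2_eq_square algebra_simps)
  then show ?thesis
    by simp
qed

lemma has_sum_form_term_y_1:
  fixes q :: complex
  assumes "norm q < 1"
  shows "(form_term q has_sum q ^ 3 * ram_psi (q ^ 4) * ram_psi (q ^ 28))
    {(x, y). (x - y) mod 8 = 2 \<and> y mod 4 = 1}"
  by (rule has_sum_form_term_bij_betw
      [OF assms theta_series_ram_psi theta_series_ram_psi _ _ bij_betw_param_y_1])
    (simp_all add: param_y_1_def quad_form_def power2_eq_square algebra_simps)

lemma has_sum_form_term_y_3_8:
  fixes q :: complex
  assumes "norm q < 1"
  shows "(form_term q has_sum q ^ 13 * ram_phi (q ^ 8) * ram_psi (q ^ 112))
    {(x, y). (x - y) mod 8 = 2 \<and> y mod 4 = 3 \<and> (x + y) mod 16 = 8}"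
  by (rule has_sum_form_term_bij_betw
      [OF assms theta_series_ram_phi theta_series_ram_psi _ _ bij_betw_param_y_3_8])
    (simp_all add: param_y_3_8_def quad_form_def power2_eq_square algebra_simps)

lemma lattice_partition:
  "{(x, y). (x - y) mod 8 = (2::int)} =
     {(x, y). (x - y) mod 8 = 2 \<and> y mod 4 = 0} \<union> {(x, y). (x - y) mod 8 = 2 \<and> y mod 4 = 2}
     \<union> {(x, y). (x - y) mod 8 = 2 \<and> y mod 4 = 3 \<and> (x + y) mod 16 = 0}
     \<union> {(x, y). (x - y) mod 8 = 2 \<and> y mod 4 = 1}
     \<union> {(x, y). (x - y) mod 8 = 2 \<and> y mod 4 = 3 \<and> (x + y) mod 16 = 8}"
proof -
  have "y mod 4 = 0 \<or> y mod 4 = 2 \<or> y mod 4 = 1 \<or>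
      (y mod 4 = 3 \<and> ((x + y) mod 16 = 0 \<or> (x + y) mod 16 = 8))"
    if "(x - y) mod 8 = 2" for x y :: int
    using that by presburger
  then show ?thesis
    by auto
qed

theorem lemma5p1:
  fixes q :: complex
  assumes "norm q < 1"
  shows "ram_psi q * ram_psi (q ^ 7) =
           ram_psi (q ^ 8) * ram_phi (q ^ 28)
         + q ^ 6 * ram_phi (q ^ 4) * ram_psi (q ^ 56)
         + q * ram_psi (q ^ 16) * ram_phi (q ^ 56)
         + q ^ 3 * ram_psi (q ^ 4) * ram_psi (q ^ 28)
         + q ^ 13 * ram_phi (q ^ 8) * ram_psi (q ^ 112)"
proof (rule has_sum_unique)
  show "(form_term q has_sum ram_psi q * ram_psi (q ^ 7)) {(x, y). (x - y) mod 8 = 2}"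
    using assms by (rule has_sum_form_term_lattice)
  show "(form_term q has_sum
           ram_psi (q ^ 8) * ram_phi (q ^ 28)
         + q ^ 6 * ram_phi (q ^ 4) * ram_psi (q ^ 56)
         + q * ram_psi (q ^ 16) * ram_phi (q ^ 56)
         + q ^ 3 * ram_psi (q ^ 4) * ram_psi (q ^ 28)
         + q ^ 13 * ram_phi (q ^ 8) * ram_psi (q ^ 112)) {(x, y). (x - y) mod 8 = 2}"
    unfolding lattice_partition
    by (intro has_sum_Un_disjoint has_sum_form_term_y_0 has_sum_form_term_y_2
        has_sum_form_term_y_3_0 has_sum_form_term_y_1 has_sum_form_term_y_3_8 assms)
      auto
qed

end
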